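(* Let $C_0\subset\mathbb{R}^n$ be closed, $F:\mathbb{R}^n\to\mathbb{R}^m$ continuously differentiable, $\bar u\in C_0$, and suppose $\mathrm{rge}\,\nabla F(\bar u)\cap N_{C_0}(\bar u)=\{0\}$. Assume $\nabla F$ is semidifferentiable at $\bar u$ for a unit direction $w\in T_{C_0}(\bar u)$. If for $z\in\mathbb{R}^m$ \[ \big[\,\nabla F(\bar u)z\in N_{C_0}(\bar u)\ \text{ and }\ (\nabla F)'(\bar u;w)z\in\mathrm{rge}\,\nabla F(\bar u)+N_{C_0}(\bar u)\,\big]\Longrightarrow z=0, \] then $F+\varDelta_{C_0}$ is metrically 2-regular around $(\bar u,F(\bar u))$ relative to $w$.
   Context: $\varDelta_{C_0}(x):=\{0\}$ if $x\in C_0$ and $\emptyset$ otherwise. $\nabla F(u)$ is the $n\times m$ transpose of the Jacobian, $\mathrm{rge}$ denotes range; $(\nabla F)'(\bar u;w):=\lim_{\tau\searrow0,w'\to w}(\nabla F(\bar u+\tau w')-\nabla F(\bar u))/\tau$ (semidifferentiable if it exists). Tangent cone $T_Z(x):=\limsup_{\tau\searrow0}(Z-x)/\tau$; limiting normal cone $N_{Z}(\bar x):=\limsup_{x\to\bar x,x\in Z}T_Z(x)^\circ$ with $K^\circ:=\{v\mid v^\top w\le0\ \forall w\in K\}$. $\mathbb{B}$ closed unit ball, $\mathrm{cone}(Z):=\bigcup_{\gamma\ge0}\gamma Z$. Graphical derivative $DS(\bar u|\bar y)(w):=\{v\mid(w,v)\in T_{\mathrm{gph}\,S}(\bar u,\bar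 y)\}$. $S$ is metrically regular around $(u,y)\in\mathrm{gph}\,S$ with constant $c>0$ if there is $\varepsilon>0$ with $\mathrm{dist}[u',S^{-1}(y')]\le c\,\mathrm{dist}[y',S(u')]$ for all $(u',y')\in(u,y)+\varepsilon\mathbb{B}$. $K_{\varepsilon,\delta}(\bar u;w):=\bar u+(\varepsilon\mathbb{B}\cap\mathrm{cone}(w+\delta\mathbb{B}))$. $S$ is metrically 2-regular around $(\bar u,\bar y)$ relative to $w\ne0$ if for some $c>0$ there are $\varepsilon_0,\delta_0,\rho_0>0$ with $\rho_0>\|w\|^{-1}\sup\{\|\eta\|\mid\eta\in DS(\bar u|\bar y)(w)\}$ such that $S$ is metrically regular around $(u,y)$ with constant $c/\|u-\bar u\|$ for all $u\in K_{\varepsilon_0,\delta_0}(\bar u;w)\setminus\{\bar u\}$ and $y\in S(u)\cap(\bar y+\rho_0\|u-\bar u\|\mathbb{B})$. *)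

theory Defs
  imports "HOL-Analysis.Analysis"
begin

text \<open>Tangent cone T_Z(x) := limsup_{tau \<searrow> 0} (Z - x)/tau (Painleve-Kuratowski outer limit).\<close>
definition tangent_cone :: "'a::real_normed_vector set \<Rightarrow> 'a \<Rightarrow> 'a set" where
  "tangent_cone Z x = {v. \<exists>\<tau> v'. (\<forall>k. \<tau> k > (0::real)) \<and> \<tau> \<longlonglongrightarrow> 0 \<and>
       v' \<longlonglongrightarrow> v \<and> (\<forall>k. x + \<tau> k *\<^sub>R v' k \<in> Z)}"

definition polar_cone :: "'a::real_inner set \<Rightarrow> 'a set" where
  "polar_cone K = {v. \<forall>w\<in>K. inner v w \<le> 0}"

text \<open>Limiting normal cone N_Z(xbar) := limsup_{x \<rightarrow> xbar, x \<in> Z} T_Z(x)^o.\<close>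
definition normal_cone :: "'a::real_inner set \<Rightarrow> 'a \<Rightarrow> 'a set" where
  "normal_cone Z xb = {v. \<exists>x v'. (\<forall>k. x k \<in> Z) \<and> x \<longlonglongrightarrow> xb \<and> v' \<longlonglongrightarrow> v \<and>
       (\<forall>k. v' k \<in> polar_cone (tangent_cone Z (x k)))}"

definition graph :: "('a \<Rightarrow> 'b set) \<Rightarrow> ('a \<times> 'b) set" where
  "graph S = {(u, y). y \<in> S u}"

definition inv_map :: "('a \<Rightarrow> 'b set) \<Rightarrow> 'b \<Rightarrow> 'a set" where
  "inv_map S y = {u. y \<in> S u}"

definition graph_deriv :: "('a::real_normed_vector \<Rightarrow> 'b::real_normed_vector set) \<Rightarrow> 'a \<Rightarrow> 'b \<Rightarrow> 'a \<Rightarrow> 'b set" where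
  "graph_deriv S u y w = {v. (w, v) \<in> tangent_cone (graph S) (u, y)}"

definition set_dist :: "'a::metric_space \<Rightarrow> 'a set \<Rightarrow> ereal" where
  "set_dist x A = (if A = {} then \<infinity> else ereal (infdist x A))"

definition metric_regular_around ::
  "('a::metric_space \<Rightarrow> 'b::metric_space set) \<Rightarrow> 'a \<Rightarrow> 'b \<Rightarrow> real \<Rightarrow> bool" where
  "metric_regular_around S u y c \<longleftrightarrow> y \<in> S u \<and> c > 0 \<and>
     (\<exists>\<epsilon>>0. \<forall>u' y'. dist (u', y') (u, y) \<le> \<epsilon> \<longrightarrow>
        set_dist u' (inv_map S y') \<le> ereal c * set_dist y' (S u'))"

definition cone_of :: "'a::real_vector set \<Rightarrow> 'a set" where
  "cone_of Z = {\<gamma> *\<^sub>R z | \<gamma> z. \<gamma> \<ge> 0 \<and> z \<in> Z}"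

definition K_set :: "real \<Rightarrow> real \<Rightarrow> 'a::real_normed_vector \<Rightarrow> 'a \<Rightarrow> 'a set" where
  "K_set \<epsilon> \<delta> u w = {u + v | v. v \<in> cball 0 \<epsilon> \<inter> cone_of (cball w \<delta>)}"

definition metric_2_regular ::
  "('a::real_normed_vector \<Rightarrow> 'b::real_normed_vector set) \<Rightarrow> 'a \<Rightarrow> 'b \<Rightarrow> 'a \<Rightarrow> bool" where
  "metric_2_regular S ub yb w \<longleftrightarrow> w \<noteq> 0 \<and>
     (\<exists>c>0. \<exists>\<epsilon>0>0. \<exists>\<delta>0>0. \<exists>\<rho>0>0.
        ereal \<rho>0 > ereal (1 / norm w) * (SUP \<eta>\<in>graph_deriv S ub yb w. ereal (norm \<eta>)) \<and>
        (\<forall>u \<in> K_set \<epsilon>0 \<delta>0 ub w - {ub}. \<forall>y \<in> S u \<inter> cball yb (\<rho>0 * norm (u - ub)).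
            metric_regular_around S u y (c / norm (u - ub))))"

definition plus_indicator :: "('a \<Rightarrow> 'b) \<Rightarrow> 'a set \<Rightarrow> 'a \<Rightarrow> 'b set" where
  "plus_indicator F C u = (if u \<in> C then {F u} else {})"

end

theory Submission
  imports Defs
begin

(*
  Metric regularity of F + Delta_C around a point u follows, by an Ekeland-type variational
  argument, from a lower bound mu on |nabla F(x) e + nu| over unit vectors e and polar normals
  nu in T_C(x)^o at the points x of C near u; the regularity constant is then of order 1/mu.
  Hence it suffices that this modulus grows at least linearly, mu(x) >= |x - ubar| / c, for x in C
  in a thin cone around the direction w. If it did not, there would be x_k -> ubar along w, unit
  e_k and polar normals nu_k with (nabla F(x_k) e_k + nu_k) / |x_k - ubar| -> 0. Splitting e_k
  along ker nabla F(ubar) and its orthogonal complement, normalising, and expanding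
  nabla F(x_k) by the semiderivative (nabla F)'(ubar; w), a subsequence converges to a nonzero
  configuration that the qualification condition and the second-order condition on z exclude.
*)

lemma tendsto_matrix_vector_mult:
  fixes M :: "'a \<Rightarrow> real^'n^'m"
  assumes "(M \<longlongrightarrow> A) F" "(v \<longlongrightarrow> x) F"
  shows "((\<lambda>k. M k *v v k) \<longlongrightarrow> A *v x) F"
  unfolding matrix_vector_mult_def
  by (intro tendsto_vec_lambda tendsto_sum tendsto_mult tendsto_vec_nth assms)

lemma has_derivative_difference_quotient:
  assumes der: "(f has_derivative f') (at x)"
    and \<tau>: "\<forall>k. 0 < \<tau> k" "\<tau> \<longlonglongrightarrow> 0" and v: "v \<longlonglongrightarrow> w"
  shows "(\<lambda>k. (f (x + \<tau> k *\<^sub>R v k) - f x) /\<^sub>R \<tau> k) \<longlonglongrightarrow> f' w"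
proof -
  have lin: "bounded_linear f'" using der by (rule has_derivative_bounded_linear)
  define R where "R k = (f (x + \<tau> k *\<^sub>R v k) - f x - f' (\<tau> k *\<^sub>R v k)) /\<^sub>R \<tau> k" for k
  have "R \<longlonglongrightarrow> 0"
    unfolding tendsto_iff
  proof (intro allI impI)
    fix e :: real assume "0 < e"
    define M where "M = norm w + 1"
    have "0 < M" unfolding M_def using norm_ge_zero[of w] by linarith
    define e' where "e' = e / (2 * M)"
    have "0 < e'" using \<open>0 < e\<close> \<open>0 < M\<close> by (simp add: e'_def)
    then obtain d where "0 < d"
      and d: "\<And>y. norm (y - x) < d \<Longrightarrow> norm (f y - f x - f' (y - x)) \<le> e' * norm (y - x)"
      using der unfolding has_derivative_at_alt by blast
    have "(\<lambda>k. norm (\<tau> k *\<^sub>R v k)) \<longlonglongrightarrow> 0"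
      by (rule tendsto_norm_zero) (use tendsto_scaleR[OF \<tau>(2) v] in simp)
    then have "eventually (\<lambda>k. norm (\<tau> k *\<^sub>R v k) < d) sequentially"
      using \<open>0 < d\<close> by (simp add: order_tendstoD(2))
    moreover have "eventually (\<lambda>k. norm (v k) < M) sequentially"
      using tendsto_norm[OF v] by (simp add: M_def order_tendstoD(2))
    ultimately show "eventually (\<lambda>k. dist (R k) 0 < e) sequentially"
    proof eventually_elim
      case (elim k)
      have "norm (R k) \<le> e' * norm (v k)"
        using d[of "x + \<tau> k *\<^sub>R v k"] elim(1) \<tau>(1)[rule_format, of k]
        by (simp add: R_def inverse_eq_divide pos_divide_le_eq mult_ac)
      also have "\<dots> \<le> e' * M"
        using elim(2) \<open>0 < e'\<close> by simp
      also have "\<dots> < e"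
        using \<open>0 < e\<close> \<open>0 < M\<close> by (simp add: e'_def)
      finally show ?case by simp
    qed
  qed
  moreover have "(\<lambda>k. f' (v k)) \<longlonglongrightarrow> f' w"
    using lin v by (rule bounded_linear.tendsto)
  ultimately have "(\<lambda>k. R k + f' (v k)) \<longlonglongrightarrow> 0 + f' w"
    by (rule tendsto_add)
  moreover have "R k + f' (v k) = (f (x + \<tau> k *\<^sub>R v k) - f x) /\<^sub>R \<tau> k" for k
    using \<tau>(1)[rule_format, of k] by (simp add: R_def linear_cmul[OF bounded_linear.linear[OF lin]] algebra_simps)
  ultimately show ?thesis by simp
qed

section \<open>Cones and first-order optimality\<close>

lemma polar_cone_scaleR: "v \<in> polar_cone K \<Longrightarrow> 0 \<le> c \<Longrightarrow> c *\<^sub>R v \<in> polar_cone K"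
  unfolding polar_cone_def by (auto simp: mult_nonneg_nonpos)

lemma normal_coneI:
  "(\<forall>k. x k \<in> Z) \<Longrightarrow> x \<longlonglongrightarrow> xb \<Longrightarrow> v' \<longlonglongrightarrow> v \<Longrightarrow>
   (\<forall>k. v' k \<in> polar_cone (tangent_cone Z (x k))) \<Longrightarrow> v \<in> normal_cone Z xb"
  unfolding normal_cone_def by blast

lemma normal_cone_scaleR:
  assumes "v \<in> normal_cone Z xb" "0 \<le> c"
  shows "c *\<^sub>R v \<in> normal_cone Z xb"
proof -
  obtain x v' where "\<forall>k. x k \<in> Z" "x \<longlonglongrightarrow> xb" "v' \<longlonglongrightarrow> v"
     "\<forall>k. v' k \<in> polar_cone (tangent_cone Z (x k))"
    using assms(1) unfolding normal_cone_def by blast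
  then show ?thesis using assms(2)
    by (intro normal_coneI[of x Z xb "\<lambda>k. c *\<^sub>R v' k"]) (auto intro: tendsto_intros polar_cone_scaleR)
qed

lemma local_min_neg_gradient_in_polar_tangent_cone:
  fixes \<psi> :: "'a::real_inner \<Rightarrow> real"
  assumes der: "(\<psi> has_derivative (\<lambda>h. inner G h)) (at z)"
    and min: "\<forall>x\<in>C. dist x z < \<delta> \<longrightarrow> \<psi> z \<le> \<psi> x" and "0 < \<delta>"
  shows "- G \<in> polar_cone (tangent_cone C z)"
  unfolding polar_cone_def
proof (intro CollectI ballI)
  fix v assume "v \<in> tangent_cone C z"
  then obtain \<tau> v' where \<tau>: "\<forall>k. 0 < \<tau> k" "\<tau> \<longlonglongrightarrow> 0" and v': "v' \<longlonglongrightarrow> v"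
    and inC: "\<forall>k. z + \<tau> k *\<^sub>R v' k \<in> C"
    unfolding tangent_cone_def by blast
  have "(\<lambda>k. norm ((z + \<tau> k *\<^sub>R v' k) - z)) \<longlonglongrightarrow> 0"
    by (rule tendsto_norm_zero) (use tendsto_scaleR[OF \<tau>(2) v'] in simp)
  then have "eventually (\<lambda>k. dist (z + \<tau> k *\<^sub>R v' k) z < \<delta>) sequentially"
    using \<open>0 < \<delta>\<close> by (simp add: dist_norm order_tendstoD(2))
  then have "eventually (\<lambda>k. 0 \<le> (\<psi> (z + \<tau> k *\<^sub>R v' k) - \<psi> z) /\<^sub>R \<tau> k) sequentially"
  proof eventually_elim
    case (elim k)
    then have "\<psi> z \<le> \<psi> (z + \<tau> k *\<^sub>R v' k)" using min inC by blast
    then show ?case using \<tau>(1) by (simp add: less_imp_le)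
  qed
  with has_derivative_difference_quotient[OF der \<tau> v'] have "0 \<le> inner G v"
    by (rule tendsto_lowerbound) simp
  then show "inner (- G) v \<le> 0" by simp
qed

section \<open>Metric regularity from a lower coderivative bound\<close>

(* A is the Jacobian of F at x, so transpose A is the paper's \<nabla>F(x). *)
definition coderiv_bounded_below :: "real^'n^'m \<Rightarrow> (real^'n) set \<Rightarrow> real^'n \<Rightarrow> real \<Rightarrow> bool" where
  "coderiv_bounded_below A C x \<mu> \<longleftrightarrow>
     (\<forall>e \<nu>. norm e = 1 \<longrightarrow> \<nu> \<in> polar_cone (tangent_cone C x) \<longrightarrow> \<mu> \<le> norm (transpose A *v e + \<nu>))"

lemma coderiv_bounded_below_mono:
  "coderiv_bounded_below A C x \<mu> \<Longrightarrow> \<mu>' \<le> \<mu> \<Longrightarrow> coderiv_bounded_below A C x \<mu>'"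
  unfolding coderiv_bounded_below_def by force

lemma has_derivative_residual_norm:
  fixes F :: "real^'n \<Rightarrow> real^'m"
  assumes "(F has_derivative (\<lambda>h. A *v h)) (at z)" "F z \<noteq> y"
  shows "((\<lambda>x. norm (F x - y)) has_derivative (\<lambda>h. inner (transpose A *v sgn (F z - y)) h)) (at z)"
proof -
  have "((\<lambda>x. F x - y) has_derivative (\<lambda>h. A *v h)) (at z)"
    using assms(1) by (auto intro!: derivative_eq_intros)
  from diff_chain_at[OF this has_derivative_norm] assms(2)
  have "((\<lambda>x. norm (F x - y)) has_derivative (\<lambda>h. inner (A *v h) (sgn (F z - y)))) (at z)"
    by (simp add: o_def)
  moreover have "inner (A *v h) v = inner (transpose A *v v) h" for h v
    by (metis dot_lmul_matrix inner_commute transpose_matrix_vector)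
  ultimately show ?thesis by simp
qed

lemma has_derivative_scaled_dist_squared:
  "((\<lambda>x. c * (norm (x - a))\<^sup>2) has_derivative (\<lambda>h. inner ((2 * c) *\<^sub>R (z - a)) h)) (at z)"
proof -
  have "((\<lambda>x. inner (x - a) (x - a)) has_derivative (\<lambda>h. inner (z - a) h + inner h (z - a))) (at z)"
    by (auto intro!: derivative_eq_intros)
  from has_derivative_mult_right[OF this, of c] show ?thesis
    unfolding power2_norm_eq_inner
    by (rule has_derivative_eq_rhs) (simp add: fun_eq_iff inner_commute)
qed

lemma Ekeland_point_exists:
  fixes g :: "'a::heine_borel \<Rightarrow> real"
  assumes "closed C" "continuous_on UNIV g" "\<forall>z. 0 \<le> g z" "u \<in> C" "0 < \<alpha>" "g u < \<alpha> * \<rho>"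
  obtains xs where "xs \<in> C" "dist u xs \<le> g u / \<alpha>"
    "\<forall>z\<in>C. dist z xs \<le> \<rho> \<longrightarrow> g xs \<le> g z + \<alpha> * dist z xs"
proof -
  define K where "K = C \<inter> cball u (2 * \<rho>)"
  have "0 < \<alpha> * \<rho>" using assms(3)[rule_format, of u] assms(6) by linarith
  then have "0 < \<rho>" using \<open>0 < \<alpha>\<close> by (simp add: zero_less_mult_iff)
  have "compact K" unfolding K_def using \<open>closed C\<close> by (simp add: closed_Int_compact)
  have "u \<in> K" unfolding K_def using \<open>u \<in> C\<close> \<open>0 < \<rho>\<close> by simp
  have "continuous_on K (\<lambda>z. g z + \<alpha> * dist z u)"
    by (intro continuous_intros continuous_on_subset[OF assms(2)]) simp
  then obtain xs where "xs \<in> K" and xs_min: "\<And>z. z \<in> K \<Longrightarrow> g xs + \<alpha> * dist xs u \<le> g z + \<alpha> * dist z u"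
    using continuous_attains_inf[OF \<open>compact K\<close>] \<open>u \<in> K\<close> by blast
  have "\<alpha> * dist xs u \<le> g u"
    using xs_min[OF \<open>u \<in> K\<close>] assms(3)[rule_format, of xs] by simp
  then have xs_u: "dist u xs \<le> g u / \<alpha>"
    using \<open>0 < \<alpha>\<close> by (simp add: pos_le_divide_eq mult.commute dist_commute)
  also have "\<dots> < \<rho>"
    using assms(5,6) by (simp add: pos_divide_less_eq mult.commute)
  finally have "dist u xs < \<rho>" .
  have Ekeland: "g xs \<le> g z + \<alpha> * dist z xs" if "z \<in> C" "dist z xs \<le> \<rho>" for z
  proof -
    have "z \<in> K"
      unfolding K_def using that \<open>dist u xs < \<rho>\<close> dist_triangle[of z u xs] by (simp add: dist_commute)
    then have "g xs + \<alpha> * dist xs u \<le> g z + \<alpha> * dist z u" by (rule xs_min)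
    moreover have "\<alpha> * dist z u \<le> \<alpha> * dist z xs + \<alpha> * dist xs u"
      using \<open>0 < \<alpha>\<close> dist_triangle[of z u xs] by (simp add: distrib_left[symmetric])
    ultimately show ?thesis by simp
  qed
  have "xs \<in> C" using \<open>xs \<in> K\<close> by (simp add: K_def)
  with that xs_u Ekeland show ?thesis by blast
qed

lemma penalized_local_minimizer:
  fixes g :: "'a::euclidean_space \<Rightarrow> real"
  assumes "closed C" "continuous_on UNIV g" "xs \<in> C" "0 < \<alpha>" "0 < s"
    and Ekeland: "\<forall>z\<in>C. dist z xs \<le> 2 * s \<longrightarrow> g xs \<le> g z + \<alpha> * dist z xs"
  obtains zs where "zs \<in> C" "dist zs xs \<le> s"
    "\<forall>x\<in>C. dist x zs < s \<longrightarrow> g zs + (\<alpha> / s) * (norm (zs - xs))\<^sup>2 \<le> g x + (\<alpha> / s) * (norm (x - xs))\<^sup>2"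
proof -
  define K where "K = C \<inter> cball xs (2 * s)"
  define \<psi> where "\<psi> z = g z + (\<alpha> / s) * (norm (z - xs))\<^sup>2" for z
  have "compact K" unfolding K_def using \<open>closed C\<close> by (simp add: closed_Int_compact)
  have "xs \<in> K" unfolding K_def using \<open>xs \<in> C\<close> \<open>0 < s\<close> by simp
  have "continuous_on K \<psi>"
    unfolding \<psi>_def by (intro continuous_intros continuous_on_subset[OF assms(2)]) simp
  then obtain zs where "zs \<in> K" and zs_min: "\<And>z. z \<in> K \<Longrightarrow> \<psi> zs \<le> \<psi> z"
    using continuous_attains_inf[OF \<open>compact K\<close>] \<open>xs \<in> K\<close> by blast
  then have "zs \<in> C" "dist zs xs \<le> 2 * s" by (auto simp: K_def dist_commute)
  have "dist zs xs \<le> s"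
  proof -
    have "\<psi> zs \<le> g xs" using zs_min[OF \<open>xs \<in> K\<close>] by (simp add: \<psi>_def)
    moreover have "g xs \<le> g zs + \<alpha> * norm (zs - xs)"
      using Ekeland \<open>zs \<in> C\<close> \<open>dist zs xs \<le> 2 * s\<close> by (simp add: dist_norm)
    ultimately have "(\<alpha> / s) * (norm (zs - xs))\<^sup>2 \<le> \<alpha> * norm (zs - xs)"
      by (simp add: \<psi>_def)
    then have "(norm (zs - xs))\<^sup>2 \<le> s * norm (zs - xs)"
      using \<open>0 < \<alpha>\<close> \<open>0 < s\<close> by (simp add: field_simps)
    then show ?thesis
      using \<open>0 < s\<close> by (cases "zs = xs") (auto simp: power2_eq_square dist_norm)
  qed
  have "\<psi> zs \<le> \<psi> x" if "x \<in> C" "dist x zs < s" for x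
  proof -
    have "x \<in> K"
      unfolding K_def using that \<open>dist zs xs \<le> s\<close> dist_triangle[of x xs zs] by (simp add: dist_commute)
    then show ?thesis by (rule zs_min)
  qed
  with that \<open>zs \<in> C\<close> \<open>dist zs xs \<le> s\<close> show ?thesis by (simp add: \<psi>_def)
qed

lemma Ekeland_point_solves:
  fixes C :: "(real^'n) set" and F :: "real^'n \<Rightarrow> real^'m" and J :: "real^'n \<Rightarrow> real^'n^'m"
  assumes "closed C" and deriv: "\<forall>u. (F has_derivative (\<lambda>h. J u *v h)) (at u)"
    and "0 < \<alpha>" "0 < \<rho>" "2 * \<alpha> < \<mu>" "xs \<in> C"
    and Ekeland: "\<forall>z\<in>C. dist z xs \<le> \<rho> \<longrightarrow> norm (F xs - y) \<le> norm (F z - y) + \<alpha> * dist z xs"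
    and bound: "\<forall>x\<in>C. dist x xs < \<rho> \<longrightarrow> coderiv_bounded_below (J x) C x \<mu>"
  shows "F xs = y"
proof (rule ccontr)
  assume "F xs \<noteq> y"
  have "isCont F z" for z
    using deriv by (blast intro: has_derivative_continuous)
  then have "continuous_on UNIV F"
    by (simp add: continuous_at_imp_continuous_on)
  then have cont: "continuous_on UNIV (\<lambda>z. norm (F z - y))"
    by (intro continuous_intros)
  have "0 < dist (F xs) y" using \<open>F xs \<noteq> y\<close> by simp
  then obtain s0 where "0 < s0" and s0: "\<And>z. dist z xs < s0 \<Longrightarrow> dist (F z) (F xs) < dist (F xs) y"
    using \<open>isCont F xs\<close> unfolding continuous_at_eps_delta by blast
  define s where "s = min (s0 / 2) (\<rho> / 2)"
  have "0 < s" "s < s0" "2 * s \<le> \<rho>"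
    using \<open>0 < s0\<close> \<open>0 < \<rho>\<close> by (auto simp: s_def)
  have Ekeland_2s: "\<forall>z\<in>C. dist z xs \<le> 2 * s \<longrightarrow> norm (F xs - y) \<le> norm (F z - y) + \<alpha> * dist z xs"
    using Ekeland \<open>2 * s \<le> \<rho>\<close> by auto
  (* The first-order condition at a minimiser of the penalised residual contradicts the bound \<mu>. *)
  obtain zs where "zs \<in> C" "dist zs xs \<le> s"
    and local_min: "\<forall>x\<in>C. dist x zs < s \<longrightarrow>
      norm (F zs - y) + (\<alpha> / s) * (norm (zs - xs))\<^sup>2 \<le> norm (F x - y) + (\<alpha> / s) * (norm (x - xs))\<^sup>2"
    using penalized_local_minimizer[OF \<open>closed C\<close> cont \<open>xs \<in> C\<close> \<open>0 < \<alpha>\<close> \<open>0 < s\<close> Ekeland_2s] by blast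
  define e where "e = sgn (F zs - y)"
  define G where "G = transpose (J zs) *v e + (2 * (\<alpha> / s)) *\<^sub>R (zs - xs)"
  have "F zs \<noteq> y"
    using s0[of zs] \<open>dist zs xs \<le> s\<close> \<open>s < s0\<close> by (auto simp: dist_commute)
  then have "norm e = 1" by (simp add: e_def norm_sgn)
  have "((\<lambda>x. norm (F x - y) + (\<alpha> / s) * (norm (x - xs))\<^sup>2) has_derivative (\<lambda>h. inner G h)) (at zs)"
    unfolding G_def e_def inner_add_left
    by (intro has_derivative_add has_derivative_residual_norm has_derivative_scaled_dist_squared
        deriv[rule_format] \<open>F zs \<noteq> y\<close>)
  then have "- G \<in> polar_cone (tangent_cone C zs)"
    using local_min \<open>0 < s\<close> by (rule local_min_neg_gradient_in_polar_tangent_cone)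
  moreover have "dist zs xs < \<rho>"
    using \<open>dist zs xs \<le> s\<close> \<open>2 * s \<le> \<rho>\<close> \<open>0 < s\<close> by simp
  ultimately have "\<mu> \<le> norm (transpose (J zs) *v e + - G)"
    using bound \<open>zs \<in> C\<close> \<open>norm e = 1\<close> unfolding coderiv_bounded_below_def by blast
  also have "\<dots> = 2 * (\<alpha> / s) * dist zs xs"
    using \<open>0 < \<alpha>\<close> \<open>0 < s\<close> by (simp add: G_def dist_norm)
  also have "\<dots> \<le> 2 * \<alpha>"
    using \<open>dist zs xs \<le> s\<close> \<open>0 < \<alpha>\<close> \<open>0 < s\<close> by (simp add: field_simps)
  finally show False using \<open>2 * \<alpha> < \<mu>\<close> by simp
qed

lemma local_solution_with_estimate:
  fixes C :: "(real^'n) set" and F :: "real^'n \<Rightarrow> real^'m" and J :: "real^'n \<Rightarrow> real^'n^'m"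
  assumes "closed C" and deriv: "\<forall>u. (F has_derivative (\<lambda>h. J u *v h)) (at u)"
    and "0 < r" "0 < \<alpha>" "2 * \<alpha> < \<mu>"
    and bound: "\<forall>x\<in>C. dist x x0 < r \<longrightarrow> coderiv_bounded_below (J x) C x \<mu>"
    and "u \<in> C" "dist u x0 < r / 4" and small: "norm (F u - y) < \<alpha> * (r / 4)"
  shows "\<exists>x\<in>C. F x = y \<and> dist u x \<le> norm (F u - y) / \<alpha>"
proof -
  have "continuous_on UNIV F"
    using deriv by (meson continuous_at_imp_continuous_on has_derivative_continuous)
  then have "continuous_on UNIV (\<lambda>z. norm (F z - y))"
    by (intro continuous_intros)
  then obtain xs where "xs \<in> C" and xs_u: "dist u xs \<le> norm (F u - y) / \<alpha>"
    and Ekeland: "\<forall>z\<in>C. dist z xs \<le> r / 4 \<longrightarrow> norm (F xs - y) \<le> norm (F z - y) + \<alpha> * dist z xs"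
    using Ekeland_point_exists[where g = "\<lambda>z. norm (F z - y)", OF \<open>closed C\<close> _ _ \<open>u \<in> C\<close> \<open>0 < \<alpha>\<close> small]
    by auto
  have "norm (F u - y) / \<alpha> < r / 4"
    using small \<open>0 < \<alpha>\<close> by (simp add: pos_divide_less_eq mult.commute)
  with xs_u have "dist u xs < r / 4" by linarith
  have "\<forall>x\<in>C. dist x xs < r / 4 \<longrightarrow> coderiv_bounded_below (J x) C x \<mu>"
  proof (intro ballI impI)
    fix x assume "x \<in> C" "dist x xs < r / 4"
    then have "dist x x0 < r"
      using \<open>dist u xs < r / 4\<close> \<open>dist u x0 < r / 4\<close> dist_triangle[of x x0 xs] dist_triangle[of xs x0 u] \<open>0 < r\<close>
      by (simp add: dist_commute)
    with \<open>x \<in> C\<close> show "coderiv_bounded_below (J x) C x \<mu>" using bound by blast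
  qed
  then have "F xs = y"
    using Ekeland_point_solves[OF \<open>closed C\<close> deriv \<open>0 < \<alpha>\<close> _ \<open>2 * \<alpha> < \<mu>\<close> \<open>xs \<in> C\<close> Ekeland] \<open>0 < r\<close>
    by simp
  with xs_u \<open>xs \<in> C\<close> show ?thesis by blast
qed

lemma metric_regular_around_plus_indicatorI:
  fixes F :: "'a::metric_space \<Rightarrow> 'b::metric_space"
  assumes "u \<in> C" "0 < \<kappa>" "0 < \<delta>"
    and solve: "\<And>u' y'. u' \<in> C \<Longrightarrow> dist u' u < \<delta> \<Longrightarrow> dist y' (F u) < \<delta> \<Longrightarrow>
                  \<exists>x\<in>C. F x = y' \<and> dist u' x \<le> \<kappa> * dist y' (F u')"
  shows "metric_regular_around (plus_indicator F C) u (F u) \<kappa>"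
  unfolding metric_regular_around_def
proof (intro conjI exI[of _ "\<delta> / 2"] allI impI)
  show "F u \<in> plus_indicator F C u" using \<open>u \<in> C\<close> by (simp add: plus_indicator_def)
  show "0 < \<kappa>" "0 < \<delta> / 2" using assms by simp_all
  fix u' y' assume near: "dist (u', y') (u, F u) \<le> \<delta> / 2"
  show "set_dist u' (inv_map (plus_indicator F C) y') \<le> ereal \<kappa> * set_dist y' (plus_indicator F C u')"
  proof (cases "u' \<in> C")
    case False
    then show ?thesis using \<open>0 < \<kappa>\<close> by (simp add: plus_indicator_def set_dist_def)
  next
    case True
    have "dist u' u < \<delta>" "dist y' (F u) < \<delta>"
      using dist_fst_le[of "(u', y')" "(u, F u)"] dist_snd_le[of "(u', y')" "(u, F u)"] near \<open>0 < \<delta>\<close>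
      by simp_all
    then obtain x where "x \<in> C" "F x = y'" and x: "dist u' x \<le> \<kappa> * dist y' (F u')"
      using solve[OF True] by blast
    then have "x \<in> inv_map (plus_indicator F C) y'"
      by (simp add: inv_map_def plus_indicator_def)
    then have "infdist u' (inv_map (plus_indicator F C) y') \<le> \<kappa> * dist y' (F u')"
      using infdist_le x by (metis order_trans)
    then show ?thesis
      using True \<open>x \<in> inv_map (plus_indicator F C) y'\<close>
      by (auto simp: set_dist_def plus_indicator_def infdist_singleton)
  qed
qed

lemma coderiv_bounded_below_imp_metric_regular_around:
  fixes C :: "(real^'n) set" and F :: "real^'n \<Rightarrow> real^'m" and J :: "real^'n \<Rightarrow> real^'n^'m"
  assumes "closed C" and deriv: "\<forall>u. (F has_derivative (\<lambda>h. J u *v h)) (at u)"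
    and "u \<in> C" "0 < r" "0 < \<kappa>" "2 < \<kappa> * \<mu>"
    and bound: "\<forall>x\<in>C. dist x u < r \<longrightarrow> coderiv_bounded_below (J x) C x \<mu>"
  shows "metric_regular_around (plus_indicator F C) u (F u) \<kappa>"
proof -
  define \<alpha> where "\<alpha> = 1 / \<kappa>"
  have "0 < \<alpha>" "2 * \<alpha> < \<mu>"
    using \<open>0 < \<kappa>\<close> \<open>2 < \<kappa> * \<mu>\<close> by (simp_all add: \<alpha>_def field_simps)
  have "isCont F u"
    using deriv has_derivative_continuous by blast
  moreover have "0 < \<alpha> * r / 8" using \<open>0 < \<alpha>\<close> \<open>0 < r\<close> by simp
  ultimately obtain d where "0 < d" and d: "\<And>u'. dist u' u < d \<Longrightarrow> dist (F u') (F u) < \<alpha> * r / 8"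
    unfolding continuous_at_eps_delta by blast
  define \<delta> where "\<delta> = min (r / 4) (min d (\<alpha> * r / 8))"
  have "0 < \<delta>" using \<open>0 < d\<close> \<open>0 < r\<close> \<open>0 < \<alpha>\<close> by (simp add: \<delta>_def)
  show ?thesis
  proof (rule metric_regular_around_plus_indicatorI[OF \<open>u \<in> C\<close> \<open>0 < \<kappa>\<close> \<open>0 < \<delta>\<close>])
    fix u' y' assume "u' \<in> C" "dist u' u < \<delta>" "dist y' (F u) < \<delta>"
    then have "dist (F u') (F u) < \<alpha> * r / 8" "dist y' (F u) < \<alpha> * r / 8" "dist u' u < r / 4"
      using d by (simp_all add: \<delta>_def)
    then have "norm (F u' - y') < \<alpha> * (r / 4)"
      using dist_triangle[of "F u'" y' "F u"] by (simp add: dist_norm norm_minus_commute)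
    then obtain x where "x \<in> C" "F x = y'" "dist u' x \<le> norm (F u' - y') / \<alpha>"
      using local_solution_with_estimate[OF \<open>closed C\<close> deriv \<open>0 < r\<close> \<open>0 < \<alpha>\<close> \<open>2 * \<alpha> < \<mu>\<close> bound
          \<open>u' \<in> C\<close> \<open>dist u' u < r / 4\<close>] by blast
    moreover have "norm (F u' - y') / \<alpha> = \<kappa> * dist y' (F u')"
      by (simp add: \<alpha>_def dist_norm norm_minus_commute)
    ultimately show "\<exists>x\<in>C. F x = y' \<and> dist u' x \<le> \<kappa> * dist y' (F u')"
      by metis
  qed
qed

section \<open>Directional metric 2-regularity\<close>

lemma norm_sgn_diff_le:
  fixes a b :: "'a::real_normed_vector"
  assumes "a \<noteq> 0" "b \<noteq> 0"
  shows "norm (sgn a - sgn b) \<le> 2 * norm (a - b) / norm b"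
proof -
  have "((norm b - norm a) / norm b) *\<^sub>R sgn a = (1 / norm a - 1 / norm b) *\<^sub>R a"
    using assms by (simp add: sgn_div_norm field_simps)
  then have "sgn a - sgn b = (a - b) /\<^sub>R norm b + ((norm b - norm a) / norm b) *\<^sub>R sgn a"
    by (simp add: sgn_div_norm divide_inverse scaleR_diff_left scaleR_diff_right)
  then have "norm (sgn a - sgn b) \<le> norm ((a - b) /\<^sub>R norm b) + norm (((norm b - norm a) / norm b) *\<^sub>R sgn a)"
    by (metis norm_triangle_ineq)
  also have "\<dots> = norm (a - b) / norm b + \<bar>norm b - norm a\<bar> / norm b"
    using assms by (simp add: norm_sgn abs_mult divide_inverse_commute)
  also have "\<bar>norm b - norm a\<bar> / norm b \<le> norm (a - b) / norm b"
    by (rule divide_right_mono) (auto simp: norm_minus_commute[of a] intro: norm_triangle_ineq3)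
  finally show ?thesis by simp
qed

lemma K_set_minus_centerD:
  assumes "norm w = 1" "u \<in> K_set \<epsilon> \<delta> ub w - {ub}"
  shows "0 < norm (u - ub)" "norm (u - ub) \<le> \<epsilon>" "norm (sgn (u - ub) - w) \<le> 2 * \<delta>"
proof -
  obtain \<gamma> z where u: "u - ub = \<gamma> *\<^sub>R z" and "0 \<le> \<gamma>" and "dist w z \<le> \<delta>" and "norm (u - ub) \<le> \<epsilon>"
    using assms(2) unfolding K_set_def cone_of_def by auto
  moreover have "u \<noteq> ub" using assms(2) by simp
  ultimately have "0 < \<gamma>" "z \<noteq> 0" using u by (cases "\<gamma> = 0"; auto)+
  show "0 < norm (u - ub)" using \<open>u \<noteq> ub\<close> by simp
  show "norm (u - ub) \<le> \<epsilon>" by fact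
  have "sgn (u - ub) = sgn z" using u \<open>0 < \<gamma>\<close> by (simp add: sgn_scaleR)
  moreover have "sgn w = w" using assms(1) by (simp add: sgn_div_norm)
  ultimately have "norm (sgn (u - ub) - w) = norm (sgn z - sgn w)" by simp
  also have "\<dots> \<le> 2 * norm (z - w)"
  proof -
    have "w \<noteq> 0" using assms(1) by auto
    then show ?thesis using norm_sgn_diff_le[OF \<open>z \<noteq> 0\<close>, of w] assms(1) by simp
  qed
  also have "\<dots> \<le> 2 * \<delta>" using \<open>dist w z \<le> \<delta>\<close> by (simp add: dist_norm norm_minus_commute)
  finally show "norm (sgn (u - ub) - w) \<le> 2 * \<delta>" .
qed

lemma graph_deriv_plus_indicator_subset:
  assumes "(F has_derivative F') (at u)"
  shows "graph_deriv (plus_indicator F C) u (F u) w \<subseteq> {F' w}"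
proof
  fix \<eta> assume "\<eta> \<in> graph_deriv (plus_indicator F C) u (F u) w"
  then obtain \<tau> v where \<tau>: "\<forall>k. 0 < \<tau> k" "\<tau> \<longlonglongrightarrow> 0" and v: "v \<longlonglongrightarrow> (w, \<eta>)"
    and graph: "\<forall>k. (u, F u) + \<tau> k *\<^sub>R v k \<in> graph (plus_indicator F C)"
    unfolding graph_deriv_def tangent_cone_def by blast
  have "F (u + \<tau> k *\<^sub>R fst (v k)) = F u + \<tau> k *\<^sub>R snd (v k)" for k
    using graph[rule_format, of k]
    by (cases "v k") (auto simp: graph_def plus_indicator_def split: if_splits)
  then have "snd (v k) = (F (u + \<tau> k *\<^sub>R fst (v k)) - F u) /\<^sub>R \<tau> k" for k
    using \<tau>(1)[rule_format, of k] by simp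
  moreover have "(\<lambda>k. (F (u + \<tau> k *\<^sub>R fst (v k)) - F u) /\<^sub>R \<tau> k) \<longlonglongrightarrow> F' w"
    using has_derivative_difference_quotient[OF assms \<tau>] tendsto_fst[OF v] by simp
  ultimately have "(\<lambda>k. snd (v k)) \<longlonglongrightarrow> F' w" by simp
  with tendsto_snd[OF v] show "\<eta> \<in> {F' w}"
    using LIMSEQ_unique by auto
qed

lemma coderiv_bounded_below_near_direction:
  assumes growth: "\<forall>x\<in>C. x \<noteq> ub \<longrightarrow> norm (x - ub) \<le> \<epsilon> \<longrightarrow> norm (sgn (x - ub) - w) \<le> \<delta> \<longrightarrow>
                    coderiv_bounded_below (J x) C x (norm (x - ub) / c)"
    and "0 < c" "0 < norm (u - ub)" "norm (u - ub) \<le> \<epsilon> / 2" "norm (sgn (u - ub) - w) \<le> 2 * \<delta> / 3"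
  shows "\<forall>x\<in>C. dist x u < min (norm (u - ub) / 2) (\<delta> * norm (u - ub) / 6) \<longrightarrow>
           coderiv_bounded_below (J x) C x (norm (u - ub) / (2 * c))"
proof (intro ballI impI)
  fix x assume "x \<in> C" and near: "dist x u < min (norm (u - ub) / 2) (\<delta> * norm (u - ub) / 6)"
  define t where "t = norm (u - ub)"
  have xu: "norm ((x - ub) - (u - ub)) < min (t / 2) (\<delta> * t / 6)"
    using near by (simp add: t_def dist_norm)
  have "t / 2 \<le> norm (x - ub)" "norm (x - ub) \<le> \<epsilon>"
    using xu norm_triangle_ineq2[of "u - ub" "x - ub"] norm_triangle_ineq[of "u - ub" "(x - ub) - (u - ub)"]
      \<open>norm (u - ub) \<le> \<epsilon> / 2\<close> \<open>0 < norm (u - ub)\<close>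
    by (simp_all add: t_def norm_minus_commute)
  then have "x \<noteq> ub" using \<open>0 < norm (u - ub)\<close> by (auto simp: t_def)
  have "norm (sgn (x - ub) - sgn (u - ub)) \<le> 2 * norm ((x - ub) - (u - ub)) / t"
    using norm_sgn_diff_le[of "x - ub" "u - ub"] \<open>x \<noteq> ub\<close> \<open>0 < norm (u - ub)\<close> by (simp add: t_def)
  also have "\<dots> \<le> \<delta> / 3"
    using xu \<open>0 < norm (u - ub)\<close> by (simp add: t_def field_simps)
  finally have "norm (sgn (x - ub) - w) \<le> \<delta>"
    using norm_triangle_ineq[of "sgn (x - ub) - sgn (u - ub)" "sgn (u - ub) - w"]
      \<open>norm (sgn (u - ub) - w) \<le> 2 * \<delta> / 3\<close> by simp
  with growth \<open>x \<in> C\<close> \<open>x \<noteq> ub\<close> \<open>norm (x - ub) \<le> \<epsilon>\<close>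
  have "coderiv_bounded_below (J x) C x (norm (x - ub) / c)" by blast
  then show "coderiv_bounded_below (J x) C x (norm (u - ub) / (2 * c))"
    by (rule coderiv_bounded_below_mono)
      (use \<open>t / 2 \<le> norm (x - ub)\<close> \<open>0 < c\<close> in \<open>simp add: t_def field_simps\<close>)
qed

lemma coderiv_growth_imp_metric_2_regular:
  fixes C :: "(real^'n) set" and F :: "real^'n \<Rightarrow> real^'m" and J :: "real^'n \<Rightarrow> real^'n^'m"
  assumes "closed C" and deriv: "\<forall>u. (F has_derivative (\<lambda>h. J u *v h)) (at u)"
    and "norm w = 1" "0 < c" "0 < \<epsilon>" "0 < \<delta>"
    and growth: "\<forall>x\<in>C. x \<noteq> ub \<longrightarrow> norm (x - ub) \<le> \<epsilon> \<longrightarrow> norm (sgn (x - ub) - w) \<le> \<delta> \<longrightarrow>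
                  coderiv_bounded_below (J x) C x (norm (x - ub) / c)"
  shows "metric_2_regular (plus_indicator F C) ub (F ub) w"
proof -
  define S where "S = plus_indicator F C"
  define \<rho> where "\<rho> = norm (J ub *v w) + 1"
  have "(SUP \<eta>\<in>graph_deriv S ub (F ub) w. ereal (norm \<eta>)) \<le> ereal (norm (J ub *v w))"
    using graph_deriv_plus_indicator_subset[OF deriv[rule_format, of ub]]
    unfolding S_def by (intro SUP_least) auto
  also have "\<dots> < ereal \<rho>" by (simp add: \<rho>_def)
  finally have \<rho>: "ereal (1 / norm w) * (SUP \<eta>\<in>graph_deriv S ub (F ub) w. ereal (norm \<eta>)) < ereal \<rho>"
    using \<open>norm w = 1\<close> by simp
  have "metric_regular_around S u y (5 * c / norm (u - ub))"
    if u: "u \<in> K_set (\<epsilon> / 2) (\<delta> / 3) ub w - {ub}" and y: "y \<in> S u" for u y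
  proof -
    define t where "t = norm (u - ub)"
    have "u \<in> C" "y = F u" using y by (auto simp: S_def plus_indicator_def split: if_splits)
    have "0 < t" "t \<le> \<epsilon> / 2" "norm (sgn (u - ub) - w) \<le> 2 * \<delta> / 3"
      using K_set_minus_centerD[OF \<open>norm w = 1\<close> u] by (simp_all add: t_def)
    then have bound: "\<forall>x\<in>C. dist x u < min (t / 2) (\<delta> * t / 6) \<longrightarrow>
                        coderiv_bounded_below (J x) C x (t / (2 * c))"
      using coderiv_bounded_below_near_direction[OF growth \<open>0 < c\<close>] by (simp add: t_def)
    have "0 < min (t / 2) (\<delta> * t / 6)" "0 < 5 * c / t" "2 < 5 * c / t * (t / (2 * c))"
      using \<open>0 < t\<close> \<open>0 < c\<close> \<open>0 < \<delta>\<close> by simp_all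
    then have "metric_regular_around S u (F u) (5 * c / t)"
      unfolding S_def using coderiv_bounded_below_imp_metric_regular_around[OF \<open>closed C\<close> deriv \<open>u \<in> C\<close> _ _ _ bound]
      by blast
    then show ?thesis by (simp add: t_def \<open>y = F u\<close>)
  qed
  then show ?thesis
    unfolding metric_2_regular_def S_def[symmetric] using \<open>norm w = 1\<close> \<open>0 < c\<close> \<open>0 < \<epsilon>\<close> \<open>0 < \<delta>\<close> \<rho>
    by (intro conjI exI[of _ "5 * c"] exI[of _ "\<epsilon> / 2"] exI[of _ "\<delta> / 3"] exI[of _ \<rho>])
      (auto simp: \<rho>_def add_nonneg_pos)
qed

section \<open>Linear growth of the coderivative bound along w\<close>

lemma exists_orthogonal_to_kernel:
  fixes A :: "real^'n^'m"
  shows "\<exists>q. (\<forall>v. A *v v = 0 \<longrightarrow> inner q v = 0) \<and> A *v q = A *v x"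
proof -
  define N where "N = {v. A *v v = 0}"
  have "subspace N"
    unfolding N_def by (rule linear_subspace_kernel) (rule matrix_vector_mul_linear)
  obtain y z where "y \<in> span N" and z: "\<And>v. v \<in> span N \<Longrightarrow> orthogonal z v" and "x = y + z"
    using orthogonal_subspace_decomp_exists[of N x] by blast
  have "y \<in> N"
    using \<open>y \<in> span N\<close> \<open>subspace N\<close> by (metis span_eq_iff)
  then have "A *v y = 0" by (simp add: N_def)
  then have "A *v z = A *v x" using \<open>x = y + z\<close> by (simp add: matrix_vector_right_distrib)
  moreover have "inner z v = 0" if "A *v v = 0" for v
  proof -
    have "v \<in> span N" using that by (simp add: N_def span_base)
    then show ?thesis using z by (simp add: orthogonal_def)
  qed
  ultimately show ?thesis by blast
qed

lemma normalized_triple_convergent_subseq: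
  fixes x :: "nat \<Rightarrow> 'a::euclidean_space" and p :: "nat \<Rightarrow> 'b::euclidean_space"
    and q :: "nat \<Rightarrow> 'c::euclidean_space" and t :: "nat \<Rightarrow> real"
  assumes "bounded (range x)" "\<forall>k. 0 < t k"
  defines "s k \<equiv> 1 / (norm (p k) + norm (q k) + t k)"
  obtains r e pb qb \<theta> where "strict_mono r" "(\<lambda>k. x (r k)) \<longlonglongrightarrow> e"
    "(\<lambda>k. s (r k) *\<^sub>R p (r k)) \<longlonglongrightarrow> pb" "(\<lambda>k. s (r k) *\<^sub>R q (r k)) \<longlonglongrightarrow> qb"
    "(\<lambda>k. s (r k) * t (r k)) \<longlonglongrightarrow> \<theta>" "norm pb + norm qb + \<theta> = 1" "0 \<le> \<theta>"
proof -
  have s: "0 < s k" "norm (s k *\<^sub>R p k) + norm (s k *\<^sub>R q k) + s k * t k = 1" for k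
  proof -
    have "0 < norm (p k) + norm (q k) + t k"
      using assms(2) by (simp add: add_nonneg_pos)
    then show "0 < s k" by (simp add: s_def)
    then have "norm (s k *\<^sub>R p k) + norm (s k *\<^sub>R q k) + s k * t k = s k * (norm (p k) + norm (q k) + t k)"
      by (simp add: algebra_simps)
    also have "\<dots> = 1"
      using \<open>0 < norm (p k) + norm (q k) + t k\<close> by (simp add: s_def)
    finally show "norm (s k *\<^sub>R p k) + norm (s k *\<^sub>R q k) + s k * t k = 1" .
  qed
  define V where "V k = (x k, s k *\<^sub>R p k, s k *\<^sub>R q k, s k * t k)" for k
  obtain B where B: "\<And>k. norm (x k) \<le> B"
    using assms(1) unfolding bounded_iff by blast
  have "norm (V k) \<le> B + 1" for k
  proof -
    have "norm (V k) \<le> norm (x k) + (norm (s k *\<^sub>R p k) + (norm (s k *\<^sub>R q k) + norm (s k * t k)))"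
      unfolding V_def by (meson add_left_mono norm_Pair_le order_trans)
    also have "\<dots> = norm (x k) + 1"
      using s[of k] assms(2)[rule_format, of k] by simp
    finally show ?thesis using B[of k] by simp
  qed
  then have "bounded (range V)" unfolding bounded_iff by blast
  then obtain l r where "strict_mono r" and l: "(V \<circ> r) \<longlonglongrightarrow> l"
    using bounded_imp_convergent_subsequence by blast
  obtain e pb qb \<theta> where l_eq: "l = (e, pb, qb, \<theta>)" by (metis prod.exhaust)
  have lim: "(\<lambda>k. x (r k)) \<longlonglongrightarrow> e" "(\<lambda>k. s (r k) *\<^sub>R p (r k)) \<longlonglongrightarrow> pb"
    "(\<lambda>k. s (r k) *\<^sub>R q (r k)) \<longlonglongrightarrow> qb" "(\<lambda>k. s (r k) * t (r k)) \<longlonglongrightarrow> \<theta>"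
    using tendsto_fst[OF l] tendsto_fst[OF tendsto_snd[OF l]] tendsto_fst[OF tendsto_snd[OF tendsto_snd[OF l]]]
      tendsto_snd[OF tendsto_snd[OF tendsto_snd[OF l]]]
    by (simp_all add: l_eq V_def o_def)
  have "(\<lambda>k. norm (s (r k) *\<^sub>R p (r k)) + norm (s (r k) *\<^sub>R q (r k)) + s (r k) * t (r k))
          \<longlonglongrightarrow> norm pb + norm qb + \<theta>"
    by (intro tendsto_intros lim)
  then have "norm pb + norm qb + \<theta> = 1"
    using s(2) LIMSEQ_unique[OF _ tendsto_const] by simp
  moreover have "0 \<le> \<theta>"
    using lim(4) by (rule tendsto_lowerbound)
      (use s(1) assms(2) in \<open>auto intro!: always_eventually less_imp_le\<close>)
  ultimately show ?thesis using that \<open>strict_mono r\<close> lim by blast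
qed

lemma normal_cone_subseq_limitI:
  assumes "\<forall>k. X k \<in> C" "X \<longlonglongrightarrow> ub" "\<forall>k. Nu k \<in> polar_cone (tangent_cone C (X k))"
    and "strict_mono r" "\<forall>k. 0 \<le> c k" "(\<lambda>k. c k *\<^sub>R Nu (r k)) \<longlonglongrightarrow> v"
  shows "v \<in> normal_cone C ub"
proof (rule normal_coneI)
  show "(\<lambda>k. X (r k)) \<longlonglongrightarrow> ub"
    using LIMSEQ_subseq_LIMSEQ[OF assms(2,4)] by (simp add: o_def)
qed (use assms in \<open>auto intro: polar_cone_scaleR\<close>)

lemma scaled_residual_identity:
  fixes A B :: "real^'m^'n"
  assumes "A *v q = A *v e" "t \<noteq> 0"
  shows "s *\<^sub>R \<nu> + A *v (s *\<^sub>R q) = (s * t) *\<^sub>R ((B *v e + \<nu>) /\<^sub>R t - ((B - A) /\<^sub>R t) *v e)"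
  using assms
  by (simp add: matrix_vector_mult_scaleR matrix_vector_mult_diff_rdistrib scaleR_matrix_vector_assoc[symmetric]
      algebra_simps)

lemma normalized_residual_limit:
  fixes A D :: "real^'m^'n" and Ak :: "nat \<Rightarrow> real^'m^'n" and E :: "nat \<Rightarrow> real^'m"
    and X Nu :: "nat \<Rightarrow> real^'n" and t :: "nat \<Rightarrow> real"
  assumes t: "\<forall>k. 0 < t k" "t \<longlonglongrightarrow> 0"
    and Dk: "(\<lambda>k. (Ak k - A) /\<^sub>R t k) \<longlonglongrightarrow> D"
    and E: "\<forall>k. norm (E k) = 1"
    and X: "\<forall>k. X k \<in> C" "X \<longlonglongrightarrow> ub"
    and Nu: "\<forall>k. Nu k \<in> polar_cone (tangent_cone C (X k))"
    and residual: "(\<lambda>k. (Ak k *v E k + Nu k) /\<^sub>R t k) \<longlonglongrightarrow> 0"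
  obtains e nb qb \<theta> where "norm e = 1" "- (A *v e) \<in> normal_cone C ub" "nb \<in> normal_cone C ub"
    "\<forall>v. A *v v = 0 \<longrightarrow> inner qb v = 0" "0 \<le> \<theta>" "norm nb + norm qb + \<theta> = 1"
    "nb + A *v qb = - \<theta> *\<^sub>R (D *v e)"
proof -
  have t_nz: "t k \<noteq> 0" for k using t(1)[rule_format, of k] by simp
  have "\<forall>k. \<exists>q. (\<forall>v. A *v v = 0 \<longrightarrow> inner q v = 0) \<and> A *v q = A *v E k"
    using exists_orthogonal_to_kernel by blast
  then obtain Q where Q: "\<forall>k. (\<forall>v. A *v v = 0 \<longrightarrow> inner (Q k) v = 0) \<and> A *v Q k = A *v E k"
    by (rule choice[THEN exE])
  have "bounded (range E)" by (rule boundedI[of _ 1]) (use E in auto)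
  (* Normalising (Nu k, Q k, t k) to unit total norm leaves a nonzero limit triple however
     large Nu k and Q k are compared with t k. *)
  define s where "s k = 1 / (norm (Nu k) + norm (Q k) + t k)" for k
  obtain r e nb qb \<theta> where "strict_mono r" and lim: "(\<lambda>k. E (r k)) \<longlonglongrightarrow> e"
    "(\<lambda>k. s (r k) *\<^sub>R Nu (r k)) \<longlonglongrightarrow> nb" "(\<lambda>k. s (r k) *\<^sub>R Q (r k)) \<longlonglongrightarrow> qb"
    "(\<lambda>k. s (r k) * t (r k)) \<longlonglongrightarrow> \<theta>" and "norm nb + norm qb + \<theta> = 1" "0 \<le> \<theta>"
    using normalized_triple_convergent_subseq[OF \<open>bounded (range E)\<close> t(1), of Nu Q] unfolding s_def by blast
  have sub: "(\<lambda>k. f (r k)) \<longlonglongrightarrow> L" if "f \<longlonglongrightarrow> L" for f :: "nat \<Rightarrow> 'b::topological_space" and L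
    using LIMSEQ_subseq_LIMSEQ[OF that \<open>strict_mono r\<close>] by (simp add: o_def)
  have t_sub: "(\<lambda>k. t (r k)) \<longlonglongrightarrow> 0"
    and residual_sub: "(\<lambda>k. (Ak (r k) *v E (r k) + Nu (r k)) /\<^sub>R t (r k)) \<longlonglongrightarrow> 0"
    and Dk_sub: "(\<lambda>k. (Ak (r k) - A) /\<^sub>R t (r k)) \<longlonglongrightarrow> D"
    using sub[OF t(2)] sub[OF residual] sub[OF Dk] by simp_all
  have "(\<lambda>k. norm (E (r k))) \<longlonglongrightarrow> norm e" by (rule tendsto_norm[OF lim(1)])
  then have "norm e = 1" using E LIMSEQ_unique[OF _ tendsto_const] by simp
  have "(\<lambda>k. t (r k) *\<^sub>R ((Ak (r k) *v E (r k) + Nu (r k)) /\<^sub>R t (r k))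
      - (A + t (r k) *\<^sub>R ((Ak (r k) - A) /\<^sub>R t (r k))) *v E (r k)) \<longlonglongrightarrow> 0 *\<^sub>R 0 - (A + 0 *\<^sub>R D) *v e"
    by (intro tendsto_intros tendsto_matrix_vector_mult t_sub residual_sub Dk_sub lim(1))
  moreover have "(\<lambda>k. t (r k) *\<^sub>R ((Ak (r k) *v E (r k) + Nu (r k)) /\<^sub>R t (r k))
      - (A + t (r k) *\<^sub>R ((Ak (r k) - A) /\<^sub>R t (r k))) *v E (r k)) = (\<lambda>k. 1 *\<^sub>R Nu (r k))"
    using t_nz by (simp add: fun_eq_iff)
  ultimately have "(\<lambda>k. 1 *\<^sub>R Nu (r k)) \<longlonglongrightarrow> - (A *v e)" by simp
  then have "- (A *v e) \<in> normal_cone C ub"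
    by (rule normal_cone_subseq_limitI[OF X Nu \<open>strict_mono r\<close>, rotated]) simp
  have "0 < s k" for k
    using t(1)[rule_format, of k] by (simp add: s_def add_nonneg_pos)
  then have "nb \<in> normal_cone C ub"
    using normal_cone_subseq_limitI[OF X Nu \<open>strict_mono r\<close> _ lim(2)] less_imp_le by blast
  have "inner qb v = 0" if "A *v v = 0" for v
  proof -
    have "(\<lambda>k. inner (s (r k) *\<^sub>R Q (r k)) v) \<longlonglongrightarrow> inner qb v"
      by (intro tendsto_inner lim(3) tendsto_const)
    moreover have "(\<lambda>k. inner (s (r k) *\<^sub>R Q (r k)) v) = (\<lambda>k. 0)" using Q that by simp
    ultimately show ?thesis by (simp add: LIMSEQ_const_iff)
  qed
  have "(\<lambda>k. s (r k) *\<^sub>R Nu (r k) + A *v (s (r k) *\<^sub>R Q (r k))) \<longlonglongrightarrow> nb + A *v qb"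
    by (intro tendsto_intros tendsto_matrix_vector_mult lim)
  also have "(\<lambda>k. s (r k) *\<^sub>R Nu (r k) + A *v (s (r k) *\<^sub>R Q (r k)))
      = (\<lambda>k. (s (r k) * t (r k)) *\<^sub>R ((Ak (r k) *v E (r k) + Nu (r k)) /\<^sub>R t (r k)
                   - ((Ak (r k) - A) /\<^sub>R t (r k)) *v E (r k)))"
    by (intro ext scaled_residual_identity) (use Q t_nz in auto)
  finally have "nb + A *v qb = \<theta> *\<^sub>R (0 - D *v e)"
    by (rule LIMSEQ_unique) (intro tendsto_intros tendsto_matrix_vector_mult residual_sub Dk_sub lim)
  with that \<open>norm e = 1\<close> \<open>- (A *v e) \<in> normal_cone C ub\<close> \<open>nb \<in> normal_cone C ub\<close>
    \<open>\<And>v. A *v v = 0 \<Longrightarrow> inner qb v = 0\<close> \<open>0 \<le> \<theta>\<close> \<open>norm nb + norm qb + \<theta> = 1\<close>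
  show ?thesis by auto
qed

lemma normalized_limit_vanishes:
  fixes A D :: "real^'m^'n"
  assumes qual: "range (\<lambda>z. A *v z) \<inter> N = {0}"
    and cond: "\<forall>z. (A *v z \<in> N \<and> D *v z \<in> {a + b | a b. a \<in> range (\<lambda>z'. A *v z') \<and> b \<in> N})
                 \<longrightarrow> z = 0"
    and cone: "\<And>v c. v \<in> N \<Longrightarrow> 0 \<le> c \<Longrightarrow> c *\<^sub>R v \<in> N"
    and "- (A *v e) \<in> N" "e \<noteq> 0" "nb \<in> N" "\<forall>v. A *v v = 0 \<longrightarrow> inner qb v = 0" "0 \<le> \<theta>"
    and eq: "nb + A *v qb = - \<theta> *\<^sub>R (D *v e)"
  shows "nb = 0 \<and> qb = 0 \<and> \<theta> = 0"
proof -
  have "0 \<in> N" using qual by blast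
  have "- (A *v e) \<in> range (\<lambda>z. A *v z) \<inter> N"
    using \<open>- (A *v e) \<in> N\<close> by (metis IntI rangeI vec.neg)
  then have Ae: "A *v (- e) = 0"
    unfolding qual by (simp add: vec.neg)
  have "\<theta> = 0"
  proof (rule ccontr)
    assume "\<theta> \<noteq> 0"
    with \<open>0 \<le> \<theta>\<close> have "0 < \<theta>" by simp
    have "D *v (- e) = (1 / \<theta>) *\<^sub>R (nb + A *v qb)"
      using eq \<open>0 < \<theta>\<close> by (simp add: vec.neg)
    also have "\<dots> = A *v ((1 / \<theta>) *\<^sub>R qb) + (1 / \<theta>) *\<^sub>R nb"
      by (simp add: matrix_vector_mult_scaleR scaleR_add_right)
    finally have "D *v (- e) = A *v ((1 / \<theta>) *\<^sub>R qb) + (1 / \<theta>) *\<^sub>R nb" .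
    then have "D *v (- e) \<in> {a + b | a b. a \<in> range (\<lambda>z'. A *v z') \<and> b \<in> N}"
      using cone[OF \<open>nb \<in> N\<close>, of "1 / \<theta>"] \<open>0 < \<theta>\<close> by auto
    moreover have "A *v (- e) \<in> N" using Ae \<open>0 \<in> N\<close> by simp
    ultimately have "- e = 0" using cond by blast
    with \<open>e \<noteq> 0\<close> show False by simp
  qed
  then have "nb = A *v (- qb)" using eq by (simp add: vec.neg eq_neg_iff_add_eq_0)
  then have "nb = 0" using qual \<open>nb \<in> N\<close> by blast
  then have "A *v qb = 0" using eq \<open>\<theta> = 0\<close> by simp
  then have "inner qb qb = 0" using assms(7) by blast
  then have "qb = 0" by simp
  with \<open>nb = 0\<close> \<open>\<theta> = 0\<close> show ?thesis by simp
qed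

lemma scaled_residual_not_tendsto_zero:
  fixes C :: "(real^'n) set" and J :: "real^'n \<Rightarrow> real^'n^'m" and ub w :: "real^'n"
    and D :: "real^'m^'n"
  assumes qual: "range (\<lambda>z. transpose (J ub) *v z) \<inter> normal_cone C ub = {0}"
    and semidiff: "((\<lambda>(\<tau>, w'). (transpose (J (ub + \<tau> *\<^sub>R w')) - transpose (J ub)) /\<^sub>R \<tau>)
                    \<longlongrightarrow> D) (at_right 0 \<times>\<^sub>F nhds w)"
    and cond: "\<forall>z. (transpose (J ub) *v z \<in> normal_cone C ub \<and>
                    D *v z \<in> {a + b | a b. a \<in> range (\<lambda>z'. transpose (J ub) *v z') \<and> b \<in> normal_cone C ub})
                 \<longrightarrow> z = 0"
    and X: "\<forall>k. X k \<in> C" "\<forall>k. X k \<noteq> ub" "(\<lambda>k. norm (X k - ub)) \<longlonglongrightarrow> 0"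
    and W: "(\<lambda>k. sgn (X k - ub)) \<longlonglongrightarrow> w"
    and E: "\<forall>k. norm (E k) = 1" and Nu: "\<forall>k. Nu k \<in> polar_cone (tangent_cone C (X k))"
  shows "\<not> (\<lambda>k. (transpose (J (X k)) *v E k + Nu k) /\<^sub>R norm (X k - ub)) \<longlonglongrightarrow> 0"
proof
  assume residual: "(\<lambda>k. (transpose (J (X k)) *v E k + Nu k) /\<^sub>R norm (X k - ub)) \<longlonglongrightarrow> 0"
  have t_pos: "\<forall>k. 0 < norm (X k - ub)" using X(2) by simp
  have X_eq: "X k = ub + norm (X k - ub) *\<^sub>R sgn (X k - ub)" for k
    using X(2) by (simp add: sgn_div_norm)
  have "(\<lambda>k. ub + norm (X k - ub) *\<^sub>R sgn (X k - ub)) \<longlonglongrightarrow> ub + 0 *\<^sub>R w"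
    by (intro tendsto_intros X(3) W)
  then have X_lim: "X \<longlonglongrightarrow> ub" using X_eq by simp
  have "filterlim (\<lambda>k. (norm (X k - ub), sgn (X k - ub))) (at_right 0 \<times>\<^sub>F nhds w) sequentially"
    using t_pos by (intro filterlim_Pair tendsto_imp_filterlim_at_right X(3) W always_eventually) auto
  from filterlim_compose[OF semidiff this]
  have Dk: "(\<lambda>k. (transpose (J (X k)) - transpose (J ub)) /\<^sub>R norm (X k - ub)) \<longlonglongrightarrow> D"
    by (simp add: X_eq[symmetric])
  obtain e nb qb \<theta> where "norm e = 1" and limit: "- (transpose (J ub) *v e) \<in> normal_cone C ub"
    "nb \<in> normal_cone C ub" "\<forall>v. transpose (J ub) *v v = 0 \<longrightarrow> inner qb v = 0" "0 \<le> \<theta>"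
    and normalized: "norm nb + norm qb + \<theta> = 1"
    and eq: "nb + transpose (J ub) *v qb = - \<theta> *\<^sub>R (D *v e)"
    by (rule normalized_residual_limit[OF t_pos X(3) Dk E X(1) X_lim Nu residual])
  moreover have "e \<noteq> 0" using \<open>norm e = 1\<close> by auto
  ultimately have "nb = 0 \<and> qb = 0 \<and> \<theta> = 0"
    using normalized_limit_vanishes[OF qual cond normal_cone_scaleR limit(1) _ limit(2-4) eq] by blast
  with normalized show False by simp
qed

lemma coderiv_linear_growth:
  fixes C :: "(real^'n) set" and J :: "real^'n \<Rightarrow> real^'n^'m" and ub w :: "real^'n"
    and D :: "real^'m^'n"
  assumes qual: "range (\<lambda>z. transpose (J ub) *v z) \<inter> normal_cone C ub = {0}"
    and semidiff: "((\<lambda>(\<tau>, w'). (transpose (J (ub + \<tau> *\<^sub>R w')) - transpose (J ub)) /\<^sub>R \<tau>)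
                    \<longlongrightarrow> D) (at_right 0 \<times>\<^sub>F nhds w)"
    and cond: "\<forall>z. (transpose (J ub) *v z \<in> normal_cone C ub \<and>
                    D *v z \<in> {a + b | a b. a \<in> range (\<lambda>z'. transpose (J ub) *v z') \<and> b \<in> normal_cone C ub})
                 \<longrightarrow> z = 0"
  shows "\<exists>c>0. \<exists>\<epsilon>>0. \<exists>\<delta>>0. \<forall>x\<in>C. x \<noteq> ub \<longrightarrow> norm (x - ub) \<le> \<epsilon> \<longrightarrow>
           norm (sgn (x - ub) - w) \<le> \<delta> \<longrightarrow> coderiv_bounded_below (J x) C x (norm (x - ub) / c)"
proof (rule ccontr)
  assume contra: "\<not> ?thesis"
  have "\<forall>k. \<exists>x e \<nu>. x \<in> C \<and> x \<noteq> ub \<and> norm (x - ub) \<le> inverse (real (Suc k)) \<and>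
          norm (sgn (x - ub) - w) \<le> inverse (real (Suc k)) \<and> norm e = 1 \<and>
          \<nu> \<in> polar_cone (tangent_cone C x) \<and>
          norm ((transpose (J x) *v e + \<nu>) /\<^sub>R norm (x - ub)) \<le> inverse (real (Suc k))"
    (is "\<forall>k. ?witness k")
  proof
    fix k
    have "0 < real (Suc k)" "0 < inverse (real (Suc k))" by simp_all
    with contra obtain x where "x \<in> C" "x \<noteq> ub" "norm (x - ub) \<le> inverse (real (Suc k))"
      "norm (sgn (x - ub) - w) \<le> inverse (real (Suc k))"
      "\<not> coderiv_bounded_below (J x) C x (norm (x - ub) / real (Suc k))"
      by blast
    moreover from this(5) obtain e \<nu> where "norm e = 1" "\<nu> \<in> polar_cone (tangent_cone C x)"
      and lt: "norm (transpose (J x) *v e + \<nu>) < norm (x - ub) / real (Suc k)"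
      unfolding coderiv_bounded_below_def by (auto simp: not_le)
    moreover have "norm ((transpose (J x) *v e + \<nu>) /\<^sub>R norm (x - ub)) \<le> inverse (real (Suc k))"
    proof -
      have "0 < norm (x - ub)" using \<open>x \<noteq> ub\<close> by simp
      have "norm (transpose (J x) *v e + \<nu>) / norm (x - ub) \<le> (norm (x - ub) / real (Suc k)) / norm (x - ub)"
        by (rule divide_right_mono) (use lt in simp_all)
      with \<open>0 < norm (x - ub)\<close> show ?thesis by (simp add: inverse_eq_divide)
    qed
    ultimately show "?witness k" by blast
  qed
  then obtain X E Nu where "\<forall>k. X k \<in> C \<and> X k \<noteq> ub \<and> norm (X k - ub) \<le> inverse (real (Suc k)) \<and>
          norm (sgn (X k - ub) - w) \<le> inverse (real (Suc k)) \<and> norm (E k) = 1 \<and>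
          Nu k \<in> polar_cone (tangent_cone C (X k)) \<and>
          norm ((transpose (J (X k)) *v E k + Nu k) /\<^sub>R norm (X k - ub)) \<le> inverse (real (Suc k))"
    unfolding choice_iff by blast
  then have X: "\<forall>k. X k \<in> C" "\<forall>k. X k \<noteq> ub" and E: "\<forall>k. norm (E k) = 1"
    and Nu: "\<forall>k. Nu k \<in> polar_cone (tangent_cone C (X k))"
    and bounds: "\<And>k. norm (X k - ub) \<le> inverse (real (Suc k))"
      "\<And>k. norm (sgn (X k - ub) - w) \<le> inverse (real (Suc k))"
      "\<And>k. norm ((transpose (J (X k)) *v E k + Nu k) /\<^sub>R norm (X k - ub)) \<le> inverse (real (Suc k))"
    by auto
  have "(\<lambda>k. norm (X k - ub)) \<longlonglongrightarrow> 0" "(\<lambda>k. sgn (X k - ub) - w) \<longlonglongrightarrow> 0"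
    "(\<lambda>k. (transpose (J (X k)) *v E k + Nu k) /\<^sub>R norm (X k - ub)) \<longlonglongrightarrow> 0"
    using bounds by (auto intro!: Lim_null_comparison[OF _ LIMSEQ_inverse_real_of_nat])
  then show False
    using scaled_residual_not_tendsto_zero[OF qual semidiff cond X] E Nu by (simp add: LIM_zero_iff)
qed

theorem theorem9:
  fixes C0 :: "(real^'n) set"
    and F :: "real^'n \<Rightarrow> real^'m"
    and J :: "real^'n \<Rightarrow> real^'n^'m"
    and ub w :: "real^'n"
    and D :: "real^'m^'n"
  assumes closed: "closed C0"
    and deriv: "\<forall>u. (F has_derivative (\<lambda>h. J u *v h)) (at u)"
    and cont: "continuous_on UNIV J"
    and ub: "ub \<in> C0"
    and qual: "range (\<lambda>z. transpose (J ub) *v z) \<inter> normal_cone C0 ub = {0}"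
    and w_unit: "norm w = 1"
    and w_tan: "w \<in> tangent_cone C0 ub"
    and semidiff: "((\<lambda>(\<tau>, w'). (transpose (J (ub + \<tau> *\<^sub>R w')) - transpose (J ub)) /\<^sub>R \<tau>)
                    \<longlongrightarrow> D) (at_right 0 \<times>\<^sub>F nhds w)"
    and cond: "\<forall>z. (transpose (J ub) *v z \<in> normal_cone C0 ub \<and>
                    D *v z \<in> {a + b | a b. a \<in> range (\<lambda>z'. transpose (J ub) *v z') \<and> b \<in> normal_cone C0 ub})
                 \<longrightarrow> z = 0"
  shows "metric_2_regular (plus_indicator F C0) ub (F ub) w"
proof -
  obtain c \<epsilon> \<delta> where "0 < c" "0 < \<epsilon>" "0 < \<delta>"
    and "\<forall>x\<in>C0. x \<noteq> ub \<longrightarrow> norm (x - ub) \<le> \<epsilon> \<longrightarrow> norm (sgn (x - ub) - w) \<le> \<delta> \<longrightarrow>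
           coderiv_bounded_below (J x) C0 x (norm (x - ub) / c)"
    using coderiv_linear_growth[OF qual semidiff cond] by blast
  then show ?thesis
    using coderiv_growth_imp_metric_2_regular[OF closed deriv w_unit] by blast
qed

end
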